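(* Let $F$ be a graph with chromatic number $3$ that has a color-critical edge. Then there exists $n_0$ such that for every $n\ge n_0$, \[\mathrm{ex}(n,P_3,F)=\mathcal{N}(P_3,T_2(n)).\] In other words, $P_3$ is $F$-Tur\'an-good.
   Context: For graphs $H$ and $G$, $\mathcal{N}(H,G)$ denotes the number of (not necessarily induced) subgraphs of $G$ isomorphic to $H$. For graphs $H,F$, $\mathrm{ex}(n,H,F)$ is the maximum of $\mathcal{N}(H,G)$ over all $F$-free graphs $G$ on $n$ vertices. $P_3$ is the path on $3$ vertices (two edges). $T_r(n)$ is the Tur\'an graph: the complete $r$-partite graph on $n$ vertices whose part sizes are $\lfloor n/r\rfloor$ or $\lceil n/r\rceil$. An edge $e$ of $F$ is color-critical if deleting $e$ decreases the chromatic number of $F$. If $F$ is $k$-chromatic and $H$ does not contain $F$, $H$ is called $F$-Tur\'an-good if $\mathrm{ex}(n,H,F)=\mathcal{N}(H,T_{k-1}(n))$ for all sufficiently large $n$. *)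

theory Defs
  imports Main
begin

type_synonym 'a graph = "'a set \<times> 'a set set"

definition wf_graph :: "'a graph \<Rightarrow> bool" where
  "wf_graph G \<longleftrightarrow> finite (fst G) \<and>
     snd G \<subseteq> {{u, v} | u v. u \<in> fst G \<and> v \<in> fst G \<and> u \<noteq> v}"

definition graph_iso :: "'a graph \<Rightarrow> 'b graph \<Rightarrow> bool" where
  "graph_iso G H \<longleftrightarrow> (\<exists>f. bij_betw f (fst G) (fst H) \<and>
     (\<forall>u\<in>fst G. \<forall>v\<in>fst G. {u, v} \<in> snd G \<longleftrightarrow> {f u, f v} \<in> snd H))"

definition subgraphs :: "'a graph \<Rightarrow> 'a graph set" where
  "subgraphs G = {S. wf_graph S \<and> fst S \<subseteq> fst G \<and> snd S \<subseteq> snd G}"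

definition count_copies :: "'b graph \<Rightarrow> 'a graph \<Rightarrow> nat" where
  "count_copies H G = card {S \<in> subgraphs G. graph_iso S H}"

definition contains :: "'a graph \<Rightarrow> 'b graph \<Rightarrow> bool" where
  "contains G F \<longleftrightarrow> (\<exists>S \<in> subgraphs G. graph_iso S F)"

definition F_free :: "'b graph \<Rightarrow> 'a graph \<Rightarrow> bool" where
  "F_free F G \<longleftrightarrow> \<not> contains G F"

definition proper_coloring :: "'a graph \<Rightarrow> nat \<Rightarrow> ('a \<Rightarrow> nat) \<Rightarrow> bool" where
  "proper_coloring G k c \<longleftrightarrow> (\<forall>v\<in>fst G. c v < k) \<and>
     (\<forall>u\<in>fst G. \<forall>v\<in>fst G. {u, v} \<in> snd G \<longrightarrow> c u \<noteq> c v)"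

definition chromatic_number :: "'a graph \<Rightarrow> nat" where
  "chromatic_number G = (LEAST k. \<exists>c. proper_coloring G k c)"

definition color_critical_edge :: "'a graph \<Rightarrow> 'a set \<Rightarrow> bool" where
  "color_critical_edge F e \<longleftrightarrow> e \<in> snd F \<and>
     chromatic_number (fst F, snd F - {e}) < chromatic_number F"

text \<open>Graphs on the vertex set {0..<n}; every n-vertex graph is isomorphic to one.\<close>
definition graphs_on :: "nat \<Rightarrow> nat graph set" where
  "graphs_on n = {G. wf_graph G \<and> fst G = {0..<n}}"

definition ex_gen :: "nat \<Rightarrow> 'b graph \<Rightarrow> 'c graph \<Rightarrow> nat" where
  "ex_gen n H F = Max {count_copies H G | G. G \<in> graphs_on n \<and> F_free F G}"

text \<open>Turan graph T_r(n): vertex i lies in part (i mod r); parts have sizes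
  floor(n/r) or ceil(n/r); edges join vertices in different parts.\<close>
definition turan_graph :: "nat \<Rightarrow> nat \<Rightarrow> nat graph" where
  "turan_graph r n = ({0..<n},
     {{u, v} | u v. u < n \<and> v < n \<and> u mod r \<noteq> v mod r})"

definition P3 :: "nat graph" where
  "P3 = ({0, 1, 2}, {{0, 1}, {1, 2}})"

end

theory Submission
  imports Defs "HOL-Analysis.Convex"
begin

(* Write Q(G) = sum_v d(v) (d(v) - 1), which is 2 N(P3, G), and B(k) = Q(T_2(k)).
  If e = ab is colour-critical, F - e has a proper 2-colouring in which a and b get the same
  colour. Hence, with t = |V(F)|, F embeds into every graph containing an edge uv together with
  t common neighbours of u and v that are completely joined to t further vertices, and F-free
  graphs contain no such configuration.

  For a graph G on k vertices without it, delete a vertex x whose removal costs Q at most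
  3k^2/4 - 2k - 1 as long as one exists. Since B(k) - B(k - 1) >= 3k^2/4 - 2k, every deletion
  raises Q - B by at least one, and as Q <= k^3 this happens only boundedly often when G starts
  with Q(G) > B(|G|). When no such vertex exists, the minimum degree exceeds k/4; a greedy choice
  then bounds every codegree along an edge by k/20 (otherwise the configuration appears), which
  pushes the minimum degree above 2k/5 and makes G triangle-free. In a triangle-free graph
  d(u) + d(v) <= k on every edge, and together with Cauchy-Schwarz this gives Q(G) <= B(k). *)

lemma sum_card_filter_swap:
  assumes "finite A" "finite B"
  shows "(\<Sum>a\<in>A. card {b\<in>B. R a b}) = (\<Sum>b\<in>B. card {a\<in>A. R a b})"
  using sum.swap_restrict[OF assms, of "\<lambda>_ _. 1::nat" R] by simp

lemma card_add_card_add_card_le: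
  assumes "finite A" "finite B" "finite C"
  shows "card A + card B + card C
    \<le> card (A \<union> B \<union> C) + card (A \<inter> B) + card (B \<inter> C) + card (A \<inter> C)"
proof -
  have "card (A \<union> B) + card (A \<inter> B) = card A + card B"
    using card_Un_Int assms by metis
  moreover have "card (A \<union> B \<union> C) + card ((A \<union> B) \<inter> C) = card (A \<union> B) + card C"
    using card_Un_Int[of "A \<union> B" C] assms by simp
  moreover have "card ((A \<union> B) \<inter> C) \<le> card (A \<inter> C) + card (B \<inter> C)"
    by (metis Int_Un_distrib2 card_Un_le)
  ultimately show ?thesis by linarith
qed

definition turan_cherry_sum :: "nat \<Rightarrow> real" where
  "turan_cherry_sum k = (real k - 2) * real (k div 2) * real ((k + 1) div 2)"

lemma turan_cherry_sum_nonneg: "k \<ge> 2 \<Longrightarrow> turan_cherry_sum k \<ge> 0"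
  unfolding turan_cherry_sum_def by simp

lemma turan_cherry_sum_Suc_ge:
  "turan_cherry_sum (Suc j) - turan_cherry_sum j \<ge> 3 * real (Suc j) ^ 2 / 4 - 2 * real (Suc j)"
proof (cases "even j")
  case True
  then obtain m where "j = 2 * m" by (auto elim: evenE)
  then show ?thesis
    by (simp add: turan_cherry_sum_def power2_eq_square algebra_simps)
next
  case False
  then obtain m where "j = 2 * m + 1" by (auto elim: oddE)
  then have "Suc j = 2 * (m + 1)" "(j + 1) div 2 = m + 1" "j div 2 = m" by simp_all
  then show ?thesis
    unfolding turan_cherry_sum_def \<open>j = 2 * m + 1\<close>
    by (simp add: power2_eq_square algebra_simps)
qed

lemma le_half_square_imp_le_turan_degree_sum:
  fixes s k :: nat
  assumes "real s \<le> real k ^ 2 / 2"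
  shows "s \<le> 2 * (k div 2) * ((k + 1) div 2)"
proof (cases "even k")
  case True
  then obtain m where "k = 2 * m" by (auto elim: evenE)
  with assms have "real s \<le> real (2 * m * m)" by (simp add: power2_eq_square)
  then have "s \<le> 2 * m * m" by (simp only: of_nat_le_iff)
  then show ?thesis using \<open>k = 2 * m\<close> by simp
next
  case False
  then obtain m where k: "k = 2 * m + 1" by (auto elim: oddE)
  with assms have "real s < real (2 * m * m + 2 * m + 1)"
    by (simp add: power2_eq_square algebra_simps)
  then have "s < 2 * m * m + 2 * m + 1" by linarith
  moreover have "(k + 1) div 2 = m + 1" "k div 2 = m" using k by auto
  ultimately show ?thesis by (simp add: algebra_simps)
qed

definition min_order :: "nat \<Rightarrow> nat" where
  "min_order t = 30 + 8 * (t + 2) + 20 * t * 8 ^ t"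

locale simple_graph =
  fixes V :: "'a set" and E :: "'a set set"
  assumes wf: "wf_graph (V, E)"
begin

definition nbhd :: "'a \<Rightarrow> 'a set" where
  "nbhd v = {u\<in>V. {u, v} \<in> E}"

abbreviation deg :: "'a \<Rightarrow> nat" where
  "deg v \<equiv> card (nbhd v)"

definition cherry_sum :: real where
  "cherry_sum = (\<Sum>v\<in>V. real (deg v) * (real (deg v) - 1))"

definition cherry_loss :: "'a \<Rightarrow> real" where
  "cherry_loss x = real (deg x) * (real (deg x) - 1) + 2 * (\<Sum>u\<in>nbhd x. real (deg u) - 1)"

text \<open>An edge uv and t common neighbours Y of u and v, completely joined to t further
  vertices Z: a copy of K(t+2,t) with one extra edge inside the larger class.\<close>
definition has_plus_biclique :: "nat \<Rightarrow> bool" where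
  "has_plus_biclique t \<longleftrightarrow> (\<exists>u v Y Z. {u, v} \<in> E \<and> Y \<subseteq> nbhd u \<inter> nbhd v \<and> card Y = t \<and>
     Z \<subseteq> V \<and> card Z = t \<and> Z \<inter> Y = {} \<and> u \<notin> Z \<and> v \<notin> Z \<and> (\<forall>z\<in>Z. \<forall>y\<in>Y. {z, y} \<in> E))"

lemma finite_V: "finite V"
  using wf unfolding wf_graph_def by simp

lemma edgeD: "{u, v} \<in> E \<Longrightarrow> u \<noteq> v \<and> u \<in> V \<and> v \<in> V"
  using wf unfolding wf_graph_def by (auto simp: doubleton_eq_iff)

lemma nbhd_subset: "nbhd v \<subseteq> V"
  unfolding nbhd_def by auto

lemma finite_nbhd: "finite (nbhd v)"
  using nbhd_subset finite_V finite_subset by blast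

lemma mem_nbhd_iff: "u \<in> nbhd v \<longleftrightarrow> {u, v} \<in> E"
  unfolding nbhd_def using edgeD by auto

lemma mem_nbhd_sym: "u \<in> nbhd v \<longleftrightarrow> v \<in> nbhd u"
  unfolding mem_nbhd_iff by (simp add: insert_commute)

lemma not_mem_nbhd_self: "v \<notin> nbhd v"
  using edgeD[of v v] mem_nbhd_iff[of v v] by auto

lemma deg_le_card: "deg v \<le> card V"
  using nbhd_subset finite_V card_mono by blast

lemma sum_nbhd_swap: "(\<Sum>v\<in>V. \<Sum>u\<in>nbhd v. f u) = (\<Sum>u\<in>V. f u * real (deg u))"
proof -
  have "(\<Sum>v\<in>V. \<Sum>u\<in>{u\<in>V. {u, v} \<in> E}. f u) = (\<Sum>u\<in>V. \<Sum>v\<in>{v\<in>V. {u, v} \<in> E}. f u)"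
    using sum.swap_restrict[OF finite_V finite_V, of "\<lambda>_ u. f u" "\<lambda>v u. {u, v} \<in> E"] by simp
  moreover have "{v\<in>V. {u, v} \<in> E} = nbhd u" for u
    unfolding nbhd_def by (auto simp: insert_commute)
  ultimately show ?thesis unfolding nbhd_def by (simp add: mult.commute)
qed

lemma sum_deg_nbhd: "(\<Sum>u\<in>nbhd v. real (deg u)) = (\<Sum>x\<in>V. real (card (nbhd x \<inter> nbhd v)))"
proof -
  have "(\<Sum>u\<in>nbhd v. card {x\<in>V. {x, u} \<in> E}) = (\<Sum>x\<in>V. card {u\<in>nbhd v. {x, u} \<in> E})"
    by (rule sum_card_filter_swap[OF finite_nbhd finite_V])
  moreover have "{u\<in>nbhd v. {x, u} \<in> E} = nbhd x \<inter> nbhd v" for x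
    using nbhd_subset unfolding nbhd_def by (auto simp: insert_commute)
  moreover have "{x\<in>V. {x, u} \<in> E} = nbhd u" for u
    unfolding nbhd_def by simp
  ultimately have "(\<Sum>u\<in>nbhd v. deg u) = (\<Sum>x\<in>V. card (nbhd x \<inter> nbhd v))" by simp
  then show ?thesis by (metis of_nat_sum)
qed

section \<open>Triangle-free graphs\<close>

lemma two_sum_deg_sq_le:
  assumes "\<And>u v. {u, v} \<in> E \<Longrightarrow> deg u + deg v \<le> k"
  shows "2 * (\<Sum>v\<in>V. real (deg v) ^ 2) \<le> real k * (\<Sum>v\<in>V. real (deg v))"
proof -
  have "(\<Sum>v\<in>V. \<Sum>u\<in>nbhd v. real (deg u) + real (deg v)) \<le> (\<Sum>v\<in>V. real (deg v) * real k)"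
  proof (rule sum_mono)
    fix v
    have "(\<Sum>u\<in>nbhd v. real (deg u) + real (deg v)) \<le> of_nat (deg v) * real k"
    proof (rule sum_bounded_above)
      fix u assume "u \<in> nbhd v"
      then have "deg u + deg v \<le> k" using assms mem_nbhd_iff by blast
      then show "real (deg u) + real (deg v) \<le> real k" by linarith
    qed
    then show "(\<Sum>u\<in>nbhd v. real (deg u) + real (deg v)) \<le> real (deg v) * real k" by simp
  qed
  moreover have "(\<Sum>v\<in>V. \<Sum>u\<in>nbhd v. real (deg u) + real (deg v))
      = 2 * (\<Sum>v\<in>V. real (deg v) ^ 2)"
    by (simp add: sum.distrib sum_nbhd_swap power2_eq_square)
  ultimately show ?thesis by (simp add: sum_distrib_left mult.commute)
qed

lemma cherry_sum_le_turan_if_triangle_free: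
  assumes k2: "card V \<ge> 2"
    and triangle_free: "\<And>u v w. {u, v} \<in> E \<Longrightarrow> {v, w} \<in> E \<Longrightarrow> {u, w} \<in> E \<Longrightarrow> False"
  shows "cherry_sum \<le> turan_cherry_sum (card V)"
proof -
  define k where "k = card V"
  define S1 where "S1 = (\<Sum>v\<in>V. real (deg v))"
  define S2 where "S2 = (\<Sum>v\<in>V. real (deg v) ^ 2)"
  have "deg u + deg v \<le> k" if "{u, v} \<in> E" for u v
  proof -
    have "nbhd u \<inter> nbhd v = {}"
      using triangle_free[of _ u v] that by (auto simp: mem_nbhd_iff insert_commute)
    then have "card (nbhd u \<union> nbhd v) = deg u + deg v"
      by (simp add: card_Un_disjoint finite_nbhd)
    moreover have "card (nbhd u \<union> nbhd v) \<le> k"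
      unfolding k_def by (simp add: card_mono finite_V nbhd_subset)
    ultimately show ?thesis by simp
  qed
  then have two: "2 * S2 \<le> real k * S1"
    unfolding S1_def S2_def by (rule two_sum_deg_sq_le)
  have cs: "S1 ^ 2 \<le> S2 * real k"
    unfolding S1_def S2_def k_def by (rule sum_squared_le_sum_of_squares)
  have S1_half: "S1 \<le> real k ^ 2 / 2"
  proof (cases "S1 > 0")
    case True
    have "S1 * S1 \<le> S2 * real k" using cs by (simp add: power2_eq_square)
    also have "\<dots> \<le> (real k * S1 / 2) * real k" using two by (intro mult_right_mono) auto
    finally have "S1 * S1 \<le> S1 * (real k ^ 2 / 2)" by (simp add: power2_eq_square algebra_simps)
    with True show ?thesis by simp
  next
    case False
    then show ?thesis using zero_le_power2[of "real k"] by linarith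
  qed
  have S1_nat: "S1 = real (\<Sum>v\<in>V. deg v)" unfolding S1_def by simp
  have "(\<Sum>v\<in>V. deg v) \<le> 2 * (k div 2) * ((k + 1) div 2)"
    by (rule le_half_square_imp_le_turan_degree_sum) (use S1_half S1_nat in simp)
  then have S1_le: "S1 \<le> real (2 * (k div 2) * ((k + 1) div 2))"
    unfolding S1_nat by (simp only: of_nat_le_iff)
  have "cherry_sum = S2 - S1"
    unfolding cherry_sum_def S1_def S2_def
    by (simp add: power2_eq_square algebra_simps sum_subtractf)
  also have "\<dots> \<le> (real k - 2) / 2 * S1" using two by (simp add: field_simps)
  also have "\<dots> \<le> (real k - 2) / 2 * real (2 * (k div 2) * ((k + 1) div 2))"
    using S1_le k2 k_def by (intro mult_left_mono) auto
  also have "\<dots> = turan_cherry_sum k" unfolding turan_cherry_sum_def by simp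
  finally show ?thesis unfolding k_def .
qed


section \<open>Graphs in which every vertex deletion is costly\<close>

text \<open>The threshold is one less than the lower bound of turan_cherry_sum_Suc_ge for the
  increment of turan_cherry_sum at k, so deleting a vertex of smaller loss raises
  cherry_sum - turan_cherry_sum by at least one.\<close>
definition high_loss :: bool where
  "high_loss \<longleftrightarrow> (\<forall>x\<in>V. cherry_loss x > 3 * real (card V) ^ 2 / 4 - 2 * real (card V) - 1)"

lemma exists_vertex_adjacent_to_eighth:
  assumes C: "C \<subseteq> V" and deg: "\<forall>y\<in>C. real (card V) / 4 \<le> real (deg y)"
    and X: "finite X" "8 * card X < card V"
  shows "\<exists>z\<in>V - X. real (card C) / 8 \<le> real (card {y\<in>C. {y, z} \<in> E})"
proof (rule ccontr)
  assume "\<not> ?thesis"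
  then have few: "\<forall>z\<in>V - X. real (card {y\<in>C. {y, z} \<in> E}) < real (card C) / 8"
    by (auto simp: not_le)
  have fin_C: "finite C" using C finite_V finite_subset by blast
  have many: "real (card V) / 8 \<le> real (card {z\<in>V - X. {y, z} \<in> E})" if "y \<in> C" for y
  proof -
    have "nbhd y - X \<subseteq> {z\<in>V - X. {y, z} \<in> E}"
      unfolding nbhd_def by (auto simp: insert_commute)
    then have "card (nbhd y - X) \<le> card {z\<in>V - X. {y, z} \<in> E}"
      using finite_V by (simp add: card_mono)
    moreover have "deg y - card X \<le> card (nbhd y - X)"
      using diff_card_le_card_Diff[OF X(1)] by blast
    ultimately have "deg y \<le> card {z\<in>V - X. {y, z} \<in> E} + card X" by arith
    then have "real (deg y) \<le> real (card {z\<in>V - X. {y, z} \<in> E}) + real (card X)" by linarith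
    moreover have "real (card V) / 4 \<le> real (deg y)" using deg that by blast
    moreover have "8 * real (card X) < real (card V)" using X(2) by linarith
    ultimately show ?thesis by linarith
  qed
  have swap: "(\<Sum>y\<in>C. card {z\<in>V - X. {y, z} \<in> E}) = (\<Sum>z\<in>V - X. card {y\<in>C. {y, z} \<in> E})"
    by (rule sum_card_filter_swap) (use fin_C finite_V in auto)
  have "real (card C) * (real (card V) / 8) = (\<Sum>y\<in>C. real (card V) / 8)"
    by simp
  also have "\<dots> \<le> (\<Sum>y\<in>C. real (card {z\<in>V - X. {y, z} \<in> E}))"
    by (rule sum_mono) (rule many)
  also have "\<dots> = (\<Sum>z\<in>V - X. real (card {y\<in>C. {y, z} \<in> E}))"
    by (simp only: of_nat_sum[symmetric] swap)
  also have "\<dots> < (\<Sum>z\<in>V - X. real (card C) / 8)"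
  proof (rule sum_strict_mono[OF _ _ few[rule_format]])
    show "finite (V - X)" using finite_V by simp
    have "card X < card V" using X(2) by linarith
    then show "V - X \<noteq> {}" using card_mono[OF X(1)] by (metis Diff_eq_empty_iff not_le)
  qed
  also have "\<dots> \<le> real (card C) * (real (card V) / 8)"
    using card_mono[OF finite_V Diff_subset, of X] by (simp add: mult.commute mult_left_mono)
  finally show False by simp
qed

lemma greedy_complete_subsets:
  assumes C: "C \<subseteq> V" and deg: "\<forall>y\<in>C. real (card V) / 4 \<le> real (deg y)"
    and X: "finite X" "card X \<le> 2" and "i \<le> t" and big: "8 * (t + 2) \<le> card V"
  shows "\<exists>Z C'. Z \<subseteq> V \<and> card Z = i \<and> Z \<inter> X = {} \<and> C' \<subseteq> C \<and>
           real (card C) / 8 ^ i \<le> real (card C') \<and> (\<forall>z\<in>Z. \<forall>y\<in>C'. {z, y} \<in> E)"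
  using \<open>i \<le> t\<close>
proof (induction i)
  case 0
  show ?case by (rule exI[of _ "{}"], rule exI[of _ C]) auto
next
  case (Suc i)
  then obtain Z C' where Z: "Z \<subseteq> V" "card Z = i" "Z \<inter> X = {}" and C': "C' \<subseteq> C"
    "real (card C) / 8 ^ i \<le> real (card C')" and complete: "\<forall>z\<in>Z. \<forall>y\<in>C'. {z, y} \<in> E"
    by auto
  have fin_Z: "finite Z" using Z(1) finite_V finite_subset by blast
  have "card (X \<union> Z) \<le> t + 1" using card_Un_le[of X Z] Z(2) X(2) Suc.prems by simp
  then obtain z where z: "z \<in> V - (X \<union> Z)"
    and adj: "real (card C') / 8 \<le> real (card {y\<in>C'. {y, z} \<in> E})"
    using exists_vertex_adjacent_to_eighth[of C' "X \<union> Z"] C' C deg X(1) fin_Z big by auto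
  show ?case
  proof (intro exI conjI)
    show "insert z Z \<subseteq> V" "card (insert z Z) = Suc i" "insert z Z \<inter> X = {}"
      using z Z fin_Z by auto
    show "{y\<in>C'. {y, z} \<in> E} \<subseteq> C" using C' by auto
    have "real (card C) / 8 ^ Suc i \<le> real (card C') / 8"
      using C'(2) by (simp add: divide_right_mono)
    then show "real (card C) / 8 ^ Suc i \<le> real (card {y\<in>C'. {y, z} \<in> E})"
      using adj by linarith
    show "\<forall>w\<in>insert z Z. \<forall>y\<in>{y\<in>C'. {y, z} \<in> E}. {w, y} \<in> E"
      using complete by (auto simp: insert_commute)
  qed
qed

lemma codegree_le_if_no_plus_biclique:
  assumes deg: "\<forall>y\<in>V. real (card V) / 4 \<le> real (deg y)" and no_biclique: "\<not> has_plus_biclique t"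
    and big: "min_order t \<le> card V" and uv: "{u, v} \<in> E"
  shows "real (card (nbhd u \<inter> nbhd v)) \<le> real (card V) / 20"
proof (rule ccontr)
  assume "\<not> ?thesis"
  then have many: "real (card V) / 20 < real (card (nbhd u \<inter> nbhd v))" by simp
  have big1: "8 * (t + 2) \<le> card V" and big2: "20 * t * 8 ^ t \<le> card V"
    using big unfolding min_order_def by linarith+
  have common_sub: "nbhd u \<inter> nbhd v \<subseteq> V" using nbhd_subset by blast
  then have common_deg: "\<forall>y\<in>nbhd u \<inter> nbhd v. real (card V) / 4 \<le> real (deg y)"
    using deg by blast
  have "finite {u, v}" "card {u, v} \<le> 2" by (simp_all add: card_insert_if)
  from greedy_complete_subsets[OF common_sub common_deg this order_refl big1]
  obtain Z C where Z: "Z \<subseteq> V" "card Z = t" "Z \<inter> {u, v} = {}"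
    and C: "C \<subseteq> nbhd u \<inter> nbhd v" "real (card (nbhd u \<inter> nbhd v)) / 8 ^ t \<le> real (card C)"
    and complete: "\<forall>z\<in>Z. \<forall>y\<in>C. {z, y} \<in> E"
    by (elim exE conjE) blast
  have "real (20 * t * 8 ^ t) \<le> real (card V)"
    using big2 by (simp only: of_nat_le_iff)
  then have "20 * real t * 8 ^ t \<le> real (card V)" by simp
  then have "real t * 8 ^ t \<le> real (card (nbhd u \<inter> nbhd v))" using many by linarith
  moreover have "real (card (nbhd u \<inter> nbhd v)) \<le> real (card C) * 8 ^ t"
    using C(2) by (simp add: field_simps)
  ultimately have "real t * 8 ^ t \<le> real (card C) * 8 ^ t" by linarith
  then have "real t \<le> real (card C)" by (rule mult_right_le_imp_le) simp
  then obtain Y where Y: "Y \<subseteq> C" "card Y = t"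
    by (meson obtain_subset_with_card_n of_nat_le_iff)
  have "z \<notin> Y" if "z \<in> Z" for z
  proof
    assume "z \<in> Y"
    then have "{z, z} \<in> E" using complete that Y(1) by blast
    then show False using edgeD by blast
  qed
  then have "has_plus_biclique t"
    unfolding has_plus_biclique_def using uv Y C(1) Z complete
    by (intro exI[of _ u] exI[of _ v] exI[of _ Y] exI[of _ Z]) auto
  with no_biclique show False ..
qed

lemma min_deg_ge_quarter_if_high_loss:
  assumes "high_loss" "12 \<le> card V" "v \<in> V"
  shows "real (card V) / 4 \<le> real (deg v)"
proof (rule ccontr)
  define k x where "k = real (card V)" and "x = real (deg v)"
  assume "\<not> ?thesis"
  then have "x < k / 4" unfolding k_def x_def by simp
  have "(\<Sum>u\<in>nbhd v. real (deg u) - 1) \<le> of_nat (deg v) * k"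
  proof (rule sum_bounded_above)
    fix u
    have "real (deg u) \<le> real (card V)" using deg_le_card[of u] by (simp only: of_nat_le_iff)
    then show "real (deg u) - 1 \<le> k" unfolding k_def by linarith
  qed
  then have "cherry_loss v \<le> x * x + 2 * (x * k)"
    unfolding cherry_loss_def x_def by (simp add: algebra_simps)
  moreover have "x * x \<le> (k / 4) * (k / 4)"
    using \<open>x < k / 4\<close> by (intro mult_mono) (auto simp: x_def)
  then have "x * x \<le> k * k / 16" by simp
  moreover have "x * k \<le> (k / 4) * k"
    using \<open>x < k / 4\<close> by (intro mult_right_mono) (auto simp: k_def)
  then have "x * k \<le> k * k / 4" by simp
  moreover have "12 \<le> k" "12 * k \<le> k * k"
    using assms(2) by (auto simp: k_def intro!: mult_right_mono)
  moreover have "3 * (k * k) / 4 - 2 * k - 1 < cherry_loss v"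
    using assms(1,3) unfolding high_loss_def k_def power2_eq_square by blast
  ultimately show False by linarith
qed

lemma min_deg_gt_two_fifths_if_high_loss:
  assumes "high_loss" "30 \<le> card V" "v \<in> V"
    and codeg: "\<And>u w. {u, w} \<in> E \<Longrightarrow> real (card (nbhd u \<inter> nbhd w)) \<le> real (card V) / 20"
  shows "2 * real (card V) / 5 < real (deg v)"
proof (rule ccontr)
  define k x where "k = real (card V)" and "x = real (deg v)"
  assume "\<not> ?thesis"
  then have "x \<le> 2 * k / 5" unfolding k_def x_def by simp
  have in_nbhd: "(\<Sum>w\<in>nbhd v. real (card (nbhd w \<inter> nbhd v))) \<le> of_nat (deg v) * (k / 20)"
    by (rule sum_bounded_above) (use codeg mem_nbhd_iff in \<open>auto simp: k_def\<close>)
  have "(\<Sum>w\<in>V - nbhd v. real (card (nbhd w \<inter> nbhd v))) \<le> of_nat (card (V - nbhd v)) * x"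
    by (rule sum_bounded_above) (simp add: card_mono finite_nbhd x_def)
  moreover have "real (card (V - nbhd v)) = k - x"
    using card_Diff_subset[OF finite_nbhd nbhd_subset] deg_le_card unfolding k_def x_def
    by (simp add: of_nat_diff)
  ultimately have outside: "(\<Sum>w\<in>V - nbhd v. real (card (nbhd w \<inter> nbhd v))) \<le> (k - x) * x"
    by simp
  have "(\<Sum>u\<in>nbhd v. real (deg u)) = (\<Sum>w\<in>V - nbhd v. real (card (nbhd w \<inter> nbhd v)))
      + (\<Sum>w\<in>nbhd v. real (card (nbhd w \<inter> nbhd v)))"
    unfolding sum_deg_nbhd by (rule sum.subset_diff[OF nbhd_subset finite_V])
  then have "(\<Sum>u\<in>nbhd v. real (deg u)) \<le> (k - x) * x + x * (k / 20)"
    using in_nbhd outside unfolding x_def by linarith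
  moreover have "(\<Sum>u\<in>nbhd v. real (deg u) - 1) \<le> (\<Sum>u\<in>nbhd v. real (deg u))"
    by (rule sum_mono) simp
  ultimately have "10 * cherry_loss v \<le> 21 * (k * x) - 10 * (x * x)"
    unfolding cherry_loss_def x_def by (simp add: algebra_simps)
  moreover have "0 \<le> (2 * k - 5 * x) * (17 * k - 10 * x)"
    using \<open>x \<le> 2 * k / 5\<close> by (intro mult_nonneg_nonneg) (auto simp: k_def)
  then have "105 * (k * x) \<le> 34 * (k * k) + 50 * (x * x)" by (simp add: algebra_simps)
  moreover have "30 \<le> k" "30 * k \<le> k * k"
    using assms(2) by (auto simp: k_def intro!: mult_right_mono)
  moreover have "3 * (k * k) / 4 - 2 * k - 1 < cherry_loss v"
    using assms(1,3) unfolding high_loss_def k_def power2_eq_square by blast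
  ultimately show False by linarith
qed

lemma no_triangle_if_deg_large_codegree_small:
  assumes deg: "\<forall>v\<in>V. 2 * real (card V) / 5 < real (deg v)"
    and codeg: "\<And>u w. {u, w} \<in> E \<Longrightarrow> real (card (nbhd u \<inter> nbhd w)) \<le> real (card V) / 20"
    and triangle: "{u, v} \<in> E" "{v, w} \<in> E" "{u, w} \<in> E"
  shows False
proof -
  have "card (nbhd u \<union> nbhd v \<union> nbhd w) \<le> card V"
    using nbhd_subset by (intro card_mono[OF finite_V]) auto
  then have "deg u + deg v + deg w
      \<le> card V + card (nbhd u \<inter> nbhd v) + card (nbhd v \<inter> nbhd w) + card (nbhd u \<inter> nbhd w)"
    using card_add_card_add_card_le[OF finite_nbhd finite_nbhd finite_nbhd, of u v w] by linarith
  then have "real (deg u) + real (deg v) + real (deg w) \<le> real (card V)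
      + real (card (nbhd u \<inter> nbhd v)) + real (card (nbhd v \<inter> nbhd w)) + real (card (nbhd u \<inter> nbhd w))"
    by linarith
  moreover have "u \<in> V" "v \<in> V" "w \<in> V" using triangle edgeD by auto
  then have "2 * real (card V) / 5 < real (deg u)" "2 * real (card V) / 5 < real (deg v)"
    "2 * real (card V) / 5 < real (deg w)" using deg by blast+
  ultimately show False using codeg[OF triangle(1)] codeg[OF triangle(2)] codeg[OF triangle(3)]
    by linarith
qed

lemma cherry_sum_le_turan_if_high_loss:
  assumes "high_loss" and no_biclique: "\<not> has_plus_biclique t" and big: "min_order t \<le> card V"
  shows "cherry_sum \<le> turan_cherry_sum (card V)"
proof (rule cherry_sum_le_turan_if_triangle_free)
  have "12 \<le> card V" "30 \<le> card V" using big unfolding min_order_def by linarith+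
  then have "\<forall>y\<in>V. real (card V) / 4 \<le> real (deg y)"
    using min_deg_ge_quarter_if_high_loss[OF \<open>high_loss\<close>] by blast
  then have codeg: "\<And>u w. {u, w} \<in> E \<Longrightarrow> real (card (nbhd u \<inter> nbhd w)) \<le> real (card V) / 20"
    using codegree_le_if_no_plus_biclique no_biclique big by blast
  then have "\<forall>v\<in>V. 2 * real (card V) / 5 < real (deg v)"
    using min_deg_gt_two_fifths_if_high_loss[OF \<open>high_loss\<close> \<open>30 \<le> card V\<close>] by blast
  then show "\<And>u v w. {u, v} \<in> E \<Longrightarrow> {v, w} \<in> E \<Longrightarrow> {u, w} \<in> E \<Longrightarrow> False"
    using no_triangle_if_deg_large_codegree_small codeg by blast
  show "2 \<le> card V" using \<open>30 \<le> card V\<close> by simp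
qed

section \<open>Progressive induction by vertex deletion\<close>

definition cherry_excess :: real where
  "cherry_excess = cherry_sum - turan_cherry_sum (card V)"

lemma cherry_sum_le_cube: "cherry_sum \<le> real (card V) ^ 3"
proof -
  have "cherry_sum \<le> of_nat (card V) * real (card V) ^ 2"
    unfolding cherry_sum_def
  proof (rule sum_bounded_above)
    fix v
    have "real (deg v) \<le> real (card V)" using deg_le_card[of v] by (simp only: of_nat_le_iff)
    then have "real (deg v) * real (deg v) \<le> real (card V) ^ 2"
      by (simp add: power2_eq_square mult_mono)
    then show "real (deg v) * (real (deg v) - 1) \<le> real (card V) ^ 2"
      by (simp add: algebra_simps)
  qed
  then show ?thesis by (simp add: power3_eq_cube power2_eq_square)
qed

lemma simple_graph_remove_vertex: "simple_graph (V - {x}) {e\<in>E. x \<notin> e}"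
  using wf unfolding simple_graph_def wf_graph_def by fastforce

lemma nbhd_remove_vertex:
  "v \<noteq> x \<Longrightarrow> simple_graph.nbhd (V - {x}) {e\<in>E. x \<notin> e} v = nbhd v - {x}"
  unfolding simple_graph.nbhd_def[OF simple_graph_remove_vertex] nbhd_def by auto

lemma cherry_sum_remove_vertex:
  assumes "x \<in> V"
  shows "simple_graph.cherry_sum (V - {x}) {e\<in>E. x \<notin> e} = cherry_sum - cherry_loss x"
proof -
  interpret G: simple_graph "V - {x}" "{e\<in>E. x \<notin> e}" by (rule simple_graph_remove_vertex)
  define f where "f v = real (deg v) * (real (deg v) - 1)" for v
  have G_term: "real (G.deg v) * (real (G.deg v) - 1)
      = f v - (if v \<in> nbhd x then 2 * (real (deg v) - 1) else 0)" if "v \<in> V - {x}" for v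
  proof (cases "v \<in> nbhd x")
    case True
    then have "x \<in> nbhd v" using mem_nbhd_sym by blast
    then have "G.deg v = deg v - 1" "deg v \<ge> 1"
      using nbhd_remove_vertex[of v] that finite_nbhd by (auto simp: Suc_le_eq card_gt_0_iff)
    then show ?thesis using True unfolding f_def by (simp add: of_nat_diff algebra_simps)
  next
    case False
    then have "G.deg v = deg v" using nbhd_remove_vertex[of v] that mem_nbhd_sym by auto
    then show ?thesis using False unfolding f_def by simp
  qed
  have "G.cherry_sum = (\<Sum>v\<in>V - {x}. f v)
      - (\<Sum>v\<in>V - {x}. if v \<in> nbhd x then 2 * (real (deg v) - 1) else 0)"
    unfolding G.cherry_sum_def by (simp add: G_term sum_subtractf)
  also have "(\<Sum>v\<in>V - {x}. if v \<in> nbhd x then 2 * (real (deg v) - 1) else 0)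
      = (\<Sum>v\<in>{v\<in>V - {x}. v \<in> nbhd x}. 2 * (real (deg v) - 1))"
    by (rule sum.inter_filter[symmetric]) (simp add: finite_V)
  also have "{v\<in>V - {x}. v \<in> nbhd x} = nbhd x"
    using nbhd_subset not_mem_nbhd_self by auto
  also have "(\<Sum>v\<in>V - {x}. f v) = cherry_sum - f x"
    using sum.remove[OF finite_V assms, of f] unfolding cherry_sum_def f_def by simp
  finally show ?thesis unfolding cherry_loss_def f_def by (simp add: sum_distrib_left)
qed

lemma has_plus_biclique_subgraph:
  assumes H: "simple_graph V' E'" and sub: "V' \<subseteq> V" "E' \<subseteq> E"
    and "simple_graph.has_plus_biclique V' E' t"
  shows "has_plus_biclique t"
proof -
  interpret H: simple_graph V' E' by (rule H)
  have nbhd_sub: "H.nbhd v \<subseteq> nbhd v" for v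
    using sub unfolding H.nbhd_def nbhd_def by auto
  obtain u v Y Z where uv: "{u, v} \<in> E'" and Y: "Y \<subseteq> H.nbhd u \<inter> H.nbhd v" "card Y = t"
    and Z: "Z \<subseteq> V'" "card Z = t" "Z \<inter> Y = {}" "u \<notin> Z" "v \<notin> Z"
    and complete: "\<forall>z\<in>Z. \<forall>y\<in>Y. {z, y} \<in> E'"
    using assms(4) unfolding H.has_plus_biclique_def by blast
  have "{u, v} \<in> E" "Y \<subseteq> nbhd u \<inter> nbhd v" "Z \<subseteq> V" "\<forall>z\<in>Z. \<forall>y\<in>Y. {z, y} \<in> E"
    using uv Y(1) Z(1) complete nbhd_sub sub by blast+
  then show ?thesis
    unfolding has_plus_biclique_def using Y(2) Z(2-)
    by (intro exI[of _ u] exI[of _ v] exI[of _ Y] exI[of _ Z]) simp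
qed

lemma no_plus_biclique_remove_vertex:
  "\<not> has_plus_biclique t \<Longrightarrow> \<not> simple_graph.has_plus_biclique (V - {x}) {e\<in>E. x \<notin> e} t"
  using has_plus_biclique_subgraph[OF simple_graph_remove_vertex] by blast

lemma exists_vertex_raising_excess:
  assumes "cherry_excess > 0" "\<not> has_plus_biclique t" "min_order t \<le> card V"
  shows "\<exists>x\<in>V. simple_graph.cherry_excess (V - {x}) {e\<in>E. x \<notin> e} \<ge> cherry_excess + 1"
proof -
  define k where "k = card V"
  have "\<not> high_loss"
    using cherry_sum_le_turan_if_high_loss assms unfolding cherry_excess_def by fastforce
  then obtain x where x: "x \<in> V" and loss: "cherry_loss x \<le> 3 * real k ^ 2 / 4 - 2 * real k - 1"
    unfolding high_loss_def k_def by force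
  have "k = Suc (k - 1)" using assms(3) unfolding k_def min_order_def by simp
  then have "turan_cherry_sum k - turan_cherry_sum (k - 1) \<ge> 3 * real k ^ 2 / 4 - 2 * real k"
    using turan_cherry_sum_Suc_ge[of "k - 1"] by simp
  moreover have card_rm: "card (V - {x}) = k - 1" using x finite_V unfolding k_def by simp
  ultimately have "simple_graph.cherry_excess (V - {x}) {e\<in>E. x \<notin> e} \<ge> cherry_excess + 1"
    using cherry_sum_remove_vertex[OF x] loss
    unfolding simple_graph.cherry_excess_def[OF simple_graph_remove_vertex]
      cherry_excess_def card_rm
    unfolding k_def by linarith
  with x show ?thesis by blast
qed

end

lemma cherry_excess_descent:
  fixes V :: "'a set"
  assumes "simple_graph V E" "\<not> simple_graph.has_plus_biclique V E t"
    and "card V = min_order t + j" "simple_graph.cherry_excess V E > 0"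
  shows "\<exists>V' (E' :: 'a set set). simple_graph V' E' \<and> card V' = min_order t \<and>
           simple_graph.cherry_excess V' E' \<ge> simple_graph.cherry_excess V E + real j"
  using assms
proof (induction j arbitrary: V E)
  case 0
  then show ?case by auto
next
  case (Suc j)
  interpret G: simple_graph V E by (rule Suc.prems(1))
  obtain x where x: "x \<in> V"
    and raise: "simple_graph.cherry_excess (V - {x}) {e\<in>E. x \<notin> e} \<ge> G.cherry_excess + 1"
    using G.exists_vertex_raising_excess Suc.prems by force
  have "card (V - {x}) = min_order t + j" using Suc.prems(3) x G.finite_V by simp
  then obtain V' E' where "simple_graph V' (E' :: 'a set set)" "card V' = min_order t"
    "simple_graph.cherry_excess V' E' \<ge> simple_graph.cherry_excess (V - {x}) {e\<in>E. x \<notin> e} + real j"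
    using Suc.IH[OF G.simple_graph_remove_vertex G.no_plus_biclique_remove_vertex]
      Suc.prems(2,4) raise
    by fastforce
  then show ?case using raise by (intro exI[of _ V'] exI[of _ E']) auto
qed

lemma eventually_cherry_sum_le_turan:
  "\<exists>n0. \<forall>(V :: 'a set) E. simple_graph V E \<longrightarrow> \<not> simple_graph.has_plus_biclique V E t \<longrightarrow>
     n0 \<le> card V \<longrightarrow> simple_graph.cherry_sum V E \<le> turan_cherry_sum (card V)"
proof (intro exI allI impI)
  define K where "K = min_order t"
  fix V :: "'a set" and E
  assume G: "simple_graph V E" and no_biclique: "\<not> simple_graph.has_plus_biclique V E t"
    and big: "K + K ^ 3 \<le> card V"
  interpret G: simple_graph V E by (rule G)
  show "G.cherry_sum \<le> turan_cherry_sum (card V)"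
  proof (rule ccontr)
    assume "\<not> ?thesis"
    then have pos: "G.cherry_excess > 0" unfolding G.cherry_excess_def by simp
    have card_split: "card V = min_order t + (card V - K)" using big unfolding K_def by simp
    have "K ^ 3 \<le> card V - K" using big by simp
    then have far: "real K ^ 3 \<le> real (card V - K)" by (simp only: of_nat_le_iff flip: of_nat_power)
    obtain V' E' where G': "simple_graph V' (E' :: 'a set set)" and "card V' = K"
      and "simple_graph.cherry_excess V' E' \<ge> G.cherry_excess + real (card V - K)"
      using cherry_excess_descent[OF G no_biclique card_split pos] unfolding K_def by blast
    moreover have "simple_graph.cherry_excess V' E' \<le> real K ^ 3"
      using simple_graph.cherry_sum_le_cube[OF G'] turan_cherry_sum_nonneg[of "card V'"]
      unfolding simple_graph.cherry_excess_def[OF G'] \<open>card V' = K\<close> K_def min_order_def by simp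
    ultimately show False using far pos by linarith
  qed
qed

section \<open>Copies of P3\<close>

definition cherry_graph :: "'a \<Rightarrow> 'a set \<Rightarrow> 'a graph" where
  "cherry_graph c A = (insert c A, (\<lambda>a. {c, a}) ` A)"

lemma inj_on_cherry_graph: "inj_on (\<lambda>(c, A). cherry_graph c A) {(c, A). card A = 2}"
proof (rule inj_onI, clarify)
  fix c c' :: 'a and A A' :: "'a set"
  assume "card A = 2" and eq: "cherry_graph c A = cherry_graph c' A'"
  then obtain x y where xy: "A = {x, y}" "x \<noteq> y" by (meson card_2_iff)
  have edges: "(\<lambda>a. {c, a}) ` A = (\<lambda>a. {c', a}) ` A'"
    using eq unfolding cherry_graph_def by simp
  have "c' \<in> {c, z}" if "z \<in> A" for z
  proof -
    have "{c, z} \<in> (\<lambda>a. {c', a}) ` A'" using edges that by blast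
    then show ?thesis by auto
  qed
  then have "c = c'" using xy by auto
  moreover have "inj (\<lambda>a. {c, a})" by (rule injI) (auto simp: doubleton_eq_iff)
  ultimately show "c = c' \<and> A = A'" using edges by (simp add: inj_image_eq_iff)
qed

lemma two_mult_choose_two: "2 * real (n choose 2) = real n * (real n - 1)"
proof (induction n)
  case (Suc n)
  have "Suc n choose 2 = n + (n choose 2)"
    using binomial_Suc_Suc[of n 1] by (simp add: numeral_2_eq_2)
  with Suc.IH show ?case by (simp add: algebra_simps)
qed simp

context simple_graph
begin

lemma cherry_graph_copy:
  assumes "c \<in> V" "A \<subseteq> nbhd c" "card A = 2"
  shows "cherry_graph c A \<in> subgraphs (V, E) \<and> graph_iso (cherry_graph c A) P3"
proof -
  obtain x y where xy: "A = {x, y}" "x \<noteq> y" using assms(3) card_2_iff by metis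
  have "x \<in> nbhd c" "y \<in> nbhd c" using assms(2) xy by auto
  then have edges: "{c, x} \<in> E" "{c, y} \<in> E" and "c \<noteq> x" "c \<noteq> y" "x \<in> V" "y \<in> V"
    using mem_nbhd_iff edgeD by (auto simp: insert_commute)
  have S: "cherry_graph c A = ({c, x, y}, {{c, x}, {c, y}})"
    unfolding cherry_graph_def xy by auto
  define f where "f v = (if v = c then 1 else if v = x then 0 else 2 :: nat)" for v
  have "bij_betw f {c, x, y} {0, 1, 2}"
    unfolding bij_betw_def inj_on_def f_def using \<open>c \<noteq> x\<close> \<open>c \<noteq> y\<close> xy(2) by auto
  moreover have "\<forall>u\<in>{c, x, y}. \<forall>v\<in>{c, x, y}.
      {u, v} \<in> {{c, x}, {c, y}} \<longleftrightarrow> {f u, f v} \<in> {{0, 1}, {1, 2}}"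
    unfolding f_def using \<open>c \<noteq> x\<close> \<open>c \<noteq> y\<close> xy(2) by (auto simp: doubleton_eq_iff)
  ultimately have "graph_iso (cherry_graph c A) P3"
    unfolding graph_iso_def P3_def S by (intro exI[of _ f]) auto
  moreover have "cherry_graph c A \<in> subgraphs (V, E)"
    unfolding subgraphs_def wf_graph_def S
    using \<open>c \<noteq> x\<close> \<open>c \<noteq> y\<close> assms(1) \<open>x \<in> V\<close> \<open>y \<in> V\<close> edges by auto
  ultimately show ?thesis by blast
qed

lemma copy_of_P3_is_cherry_graph:
  assumes S: "S \<in> subgraphs (V, E)" "graph_iso S P3"
  shows "\<exists>c A. c \<in> V \<and> A \<subseteq> nbhd c \<and> card A = 2 \<and> S = cherry_graph c A"
proof -
  obtain VS ES where S_eq: "S = (VS, ES)" by (cases S)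
  have wf_S: "wf_graph (VS, ES)" and "VS \<subseteq> V" "ES \<subseteq> E"
    using S(1) unfolding S_eq subgraphs_def by auto
  obtain f where bij: "bij_betw f VS {0, 1, 2}"
    and iso: "\<forall>u\<in>VS. \<forall>v\<in>VS. {u, v} \<in> ES \<longleftrightarrow> {f u, f v} \<in> {{0 :: nat, 1}, {1, 2}}"
    using S(2) unfolding S_eq graph_iso_def P3_def by auto
  define x c y where "x = inv_into VS f 0" and "c = inv_into VS f 1" and "y = inv_into VS f 2"
  have inv_f: "inv_into VS f i \<in> VS \<and> f (inv_into VS f i) = i" if "i \<in> {0, 1, 2}" for i
  proof -
    have "i \<in> f ` VS" using bij that by (simp add: bij_betw_def)
    then show ?thesis by (simp add: inv_into_into f_inv_into_f)
  qed
  have in_VS: "x \<in> VS" "c \<in> VS" "y \<in> VS" and f_xcy: "f x = 0" "f c = 1" "f y = 2"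
    using inv_f[of 0] inv_f[of 1] inv_f[of 2] unfolding x_def c_def y_def by simp_all
  have VS_eq: "VS = {x, c, y}"
  proof
    show "VS \<subseteq> {x, c, y}"
    proof
      fix v assume "v \<in> VS"
      then have "f v \<in> {0, 1, 2}" "inv_into VS f (f v) = v"
        using bij_betwE[OF bij] bij_betw_imp_inj_on[OF bij] by (blast, simp add: inv_into_f_f)
      then show "v \<in> {x, c, y}" unfolding x_def c_def y_def by auto
    qed
  qed (use in_VS in auto)
  have "x \<noteq> c" "c \<noteq> y" "x \<noteq> y" using f_xcy by auto
  have ES_eq: "ES = {{c, x}, {c, y}}"
  proof
    show "ES \<subseteq> {{c, x}, {c, y}}"
    proof
      fix e assume e: "e \<in> ES"
      then obtain p q where pq: "e = {p, q}" "p \<in> VS" "q \<in> VS" "p \<noteq> q"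
        using wf_S unfolding wf_graph_def by auto
      then have "{f p, f q} \<in> {{0 :: nat, 1}, {1, 2}}" using iso e by auto
      then show "e \<in> {{c, x}, {c, y}}"
        using pq f_xcy unfolding VS_eq by (auto simp: doubleton_eq_iff)
    qed
    show "{{c, x}, {c, y}} \<subseteq> ES"
      using iso in_VS f_xcy by (auto simp: insert_commute)
  qed
  have "{x, y} \<subseteq> nbhd c" using ES_eq \<open>ES \<subseteq> E\<close> mem_nbhd_iff by (auto simp: insert_commute)
  moreover have "S = cherry_graph c {x, y}"
    unfolding S_eq cherry_graph_def VS_eq ES_eq by auto
  ultimately show ?thesis
    using in_VS \<open>VS \<subseteq> V\<close> \<open>x \<noteq> y\<close> by (intro exI[of _ c] exI[of _ "{x, y}"]) auto
qed

lemma count_copies_P3: "count_copies P3 (V, E) = (\<Sum>c\<in>V. deg c choose 2)"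
proof -
  define I where "I = (SIGMA c:V. {A. A \<subseteq> nbhd c \<and> card A = 2})"
  have "{S \<in> subgraphs (V, E). graph_iso S P3} = (\<lambda>(c, A). cherry_graph c A) ` I"
    unfolding I_def using cherry_graph_copy copy_of_P3_is_cherry_graph by fastforce
  moreover have "inj_on (\<lambda>(c, A). cherry_graph c A) I"
    by (rule inj_on_subset[OF inj_on_cherry_graph]) (auto simp: I_def)
  ultimately have "count_copies P3 (V, E) = card I"
    unfolding count_copies_def by (simp add: card_image)
  also have "\<dots> = (\<Sum>c\<in>V. card {A. A \<subseteq> nbhd c \<and> card A = 2})"
    unfolding I_def using finite_V finite_nbhd by (intro card_SigmaI) auto
  also have "\<dots> = (\<Sum>c\<in>V. deg c choose 2)"
    using finite_nbhd by (simp add: n_subsets)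
  finally show ?thesis .
qed

lemma two_count_copies_P3: "2 * real (count_copies P3 (V, E)) = cherry_sum"
  unfolding count_copies_P3 cherry_sum_def by (simp add: sum_distrib_left two_mult_choose_two)

end

section \<open>Embedding F\<close>

lemma wf_graph_image:
  assumes wf: "wf_graph F" and inj: "inj_on \<phi> (fst F)"
  shows "wf_graph (\<phi> ` fst F, (`) \<phi> ` snd F)"
  unfolding wf_graph_def fst_conv snd_conv
proof (intro conjI subsetI)
  show "finite (\<phi> ` fst F)" using wf unfolding wf_graph_def by simp
  fix e' assume "e' \<in> (`) \<phi> ` snd F"
  then obtain p q where "e' = {\<phi> p, \<phi> q}" "p \<in> fst F" "q \<in> fst F" "p \<noteq> q"
    using wf unfolding wf_graph_def by auto
  moreover have "\<phi> p \<noteq> \<phi> q" using inj calculation by (meson inj_onD)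
  ultimately show "e' \<in> {{u, v} |u v. u \<in> \<phi> ` fst F \<and> v \<in> \<phi> ` fst F \<and> u \<noteq> v}"
    by auto
qed

lemma graph_iso_image:
  assumes wf: "wf_graph F" and inj: "inj_on \<phi> (fst F)"
  shows "graph_iso (\<phi> ` fst F, (`) \<phi> ` snd F) F"
proof -
  define g where "g = inv_into (fst F) \<phi>"
  have "bij_betw g (\<phi> ` fst F) (fst F)"
    unfolding g_def by (rule bij_betw_inv_into[OF inj_on_imp_bij_betw[OF inj]])
  moreover have "{s, s'} \<in> (`) \<phi> ` snd F \<longleftrightarrow> {g s, g s'} \<in> snd F"
    if in_image: "s \<in> \<phi> ` fst F" "s' \<in> \<phi> ` fst F" for s s'
  proof -
    obtain p q where pq: "p \<in> fst F" "q \<in> fst F" "s = \<phi> p" "s' = \<phi> q" using in_image by blast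
    then have "g s = p" "g s' = q" unfolding g_def using inj by simp_all
    have "\<phi> ` {p, q} \<in> (`) \<phi> ` snd F \<longleftrightarrow> {p, q} \<in> snd F"
    proof
      assume "\<phi> ` {p, q} \<in> (`) \<phi> ` snd F"
      then obtain e where "e \<in> snd F" "\<phi> ` {p, q} = \<phi> ` e" by blast
      moreover have "e \<subseteq> fst F" using wf \<open>e \<in> snd F\<close> unfolding wf_graph_def by auto
      moreover have "{p, q} \<subseteq> fst F" using pq by simp
      ultimately have "{p, q} = e" using inj_on_image_eq_iff[OF inj] by metis
      then show "{p, q} \<in> snd F" using \<open>e \<in> snd F\<close> by simp
    qed blast
    then show ?thesis using pq \<open>g s = p\<close> \<open>g s' = q\<close> by simp
  qed
  ultimately show ?thesis unfolding graph_iso_def by auto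
qed

lemma contains_if_embedding:
  assumes wf: "wf_graph F" and inj: "inj_on \<phi> (fst F)" and into: "\<phi> ` fst F \<subseteq> V"
    and edges: "\<And>p q. p \<in> fst F \<Longrightarrow> q \<in> fst F \<Longrightarrow> {p, q} \<in> snd F \<Longrightarrow> {\<phi> p, \<phi> q} \<in> E"
  shows "contains (V, E) F"
proof -
  have "(`) \<phi> ` snd F \<subseteq> E"
  proof
    fix e' assume "e' \<in> (`) \<phi> ` snd F"
    then obtain p q where "e' = {\<phi> p, \<phi> q}" "p \<in> fst F" "q \<in> fst F" "{p, q} \<in> snd F"
      using wf unfolding wf_graph_def by auto
    then show "e' \<in> E" using edges by simp
  qed
  then have "(\<phi> ` fst F, (`) \<phi> ` snd F) \<in> subgraphs (V, E)"
    unfolding subgraphs_def using wf_graph_image[OF wf inj] into by simp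
  then show ?thesis unfolding contains_def using graph_iso_image[OF wf inj] by blast
qed

lemma chromatic_number_le: "proper_coloring G k c \<Longrightarrow> chromatic_number G \<le> k"
  unfolding chromatic_number_def by (rule Least_le) blast

lemma proper_coloring_chromatic_number:
  assumes wf: "wf_graph G"
  shows "\<exists>c. proper_coloring G (chromatic_number G) c"
proof -
  obtain h where h: "bij_betw h (fst G) {0..<card (fst G)}"
    using ex_bij_betw_finite_nat wf unfolding wf_graph_def by blast
  have "proper_coloring G (card (fst G)) h"
    unfolding proper_coloring_def
  proof (intro conjI ballI impI)
    show "h v < card (fst G)" if "v \<in> fst G" for v using h that bij_betwE by fastforce
    fix u v assume "u \<in> fst G" "v \<in> fst G" "{u, v} \<in> snd G"
    moreover have "u \<noteq> v"
      using wf \<open>{u, v} \<in> snd G\<close> unfolding wf_graph_def by (auto simp: doubleton_eq_iff)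
    ultimately show "h u \<noteq> h v" using h unfolding bij_betw_def inj_on_def by blast
  qed
  then show ?thesis
    unfolding chromatic_number_def by (intro LeastI_ex[of "\<lambda>k. \<exists>c. proper_coloring G k c"]) blast
qed

lemma critical_edge_two_coloring:
  assumes wf: "wf_graph F" and chi: "chromatic_number F = 3" and crit: "color_critical_edge F e"
  obtains c :: "'a \<Rightarrow> nat" and a b where "\<forall>w\<in>fst F. c w < 2" "e = {a, b}" "a \<in> fst F" "b \<in> fst F"
    "a \<noteq> b" "c a = c b" "\<And>p q. p \<in> fst F \<Longrightarrow> q \<in> fst F \<Longrightarrow> {p, q} \<in> snd F \<Longrightarrow> {p, q} \<noteq> e \<Longrightarrow> c p \<noteq> c q"
proof -
  define F' where "F' = (fst F, snd F - {e})"
  have "wf_graph F'" using wf unfolding F'_def wf_graph_def by auto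
  then obtain c where c: "proper_coloring F' (chromatic_number F') c"
    using proper_coloring_chromatic_number by blast
  have "chromatic_number F' < 3" using crit chi unfolding color_critical_edge_def F'_def by simp
  then have two: "\<forall>w\<in>fst F. c w < 2" using c unfolding proper_coloring_def F'_def by fastforce
  have proper_off_e: "c p \<noteq> c q" if "p \<in> fst F" "q \<in> fst F" "{p, q} \<in> snd F" "{p, q} \<noteq> e" for p q
    using c that unfolding proper_coloring_def F'_def by simp
  have "\<not> proper_coloring F 2 c" using chromatic_number_le[of F 2 c] chi by linarith
  then obtain a b where ab: "a \<in> fst F" "b \<in> fst F" "{a, b} \<in> snd F" "c a = c b"
    using two unfolding proper_coloring_def by blast
  then have "e = {a, b}" using proper_off_e by blast
  moreover have "a \<noteq> b" using wf ab(3) unfolding wf_graph_def by (auto simp: doubleton_eq_iff)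
  ultimately show ?thesis using that two ab proper_off_e by blast
qed

lemma exists_inj_map_into_parts:
  assumes fin: "finite A" "finite B" "finite P" "finite Q"
    and ab: "a \<in> A" "b \<in> A" "a \<noteq> b" and disj: "A \<inter> B = {}"
    and card: "card (A - {a, b}) \<le> card P" "card B \<le> card Q"
    and uv: "u \<noteq> v" "u \<notin> P" "v \<notin> P" and sep: "({u, v} \<union> P) \<inter> Q = {}"
  obtains \<phi> where "\<phi> a = u" "\<phi> b = v" "\<phi> ` A \<subseteq> {u, v} \<union> P" "\<phi> ` B \<subseteq> Q" "inj_on \<phi> (A \<union> B)"
proof -
  obtain h0 where h0: "h0 ` (A - {a, b}) \<subseteq> P" "inj_on h0 (A - {a, b})"
    using card_le_inj[OF _ fin(3) card(1)] fin(1) by auto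
  obtain h1 where h1: "h1 ` B \<subseteq> Q" "inj_on h1 B"
    using card_le_inj[OF fin(2,4) card(2)] by auto
  define \<phi> where
    "\<phi> w = (if w = a then u else if w = b then v else if w \<in> B then h1 w else h0 w)" for w
  have \<phi>_ab: "\<phi> a = u" "\<phi> b = v" unfolding \<phi>_def using ab(3) by simp_all
  have \<phi>_rest: "\<phi> w = h0 w" if "w \<in> A - {a, b}" for w using that disj unfolding \<phi>_def by auto
  have \<phi>_B: "\<phi> w = h1 w" if "w \<in> B" for w using that ab disj unfolding \<phi>_def by auto
  have A_split: "A = {a, b} \<union> (A - {a, b})" using ab by blast
  have img_rest: "\<phi> ` (A - {a, b}) \<subseteq> P" using h0(1) \<phi>_rest by auto
  have img_A: "\<phi> ` A \<subseteq> {u, v} \<union> P" using img_rest \<phi>_ab by (subst A_split) auto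
  have img_B: "\<phi> ` B \<subseteq> Q" using h1(1) \<phi>_B by auto
  have "inj_on \<phi> ({a, b} \<union> (A - {a, b}))"
  proof (rule inj_on_Un[THEN iffD2], intro conjI)
    show "inj_on \<phi> {a, b}" using \<phi>_ab uv(1) by (auto simp: inj_on_def)
    show "inj_on \<phi> (A - {a, b})" using h0(2) \<phi>_rest inj_on_cong by blast
    show "\<phi> ` ({a, b} - (A - {a, b})) \<inter> \<phi> ` (A - {a, b} - {a, b}) = {}"
      using img_rest \<phi>_ab uv(2,3) by auto
  qed
  then have "inj_on \<phi> A" using A_split by simp
  moreover have "inj_on \<phi> B" using h1(2) \<phi>_B inj_on_cong by blast
  moreover have "\<phi> ` (A - B) \<inter> \<phi> ` (B - A) = {}" using img_A img_B sep by blast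
  ultimately have "inj_on \<phi> (A \<union> B)" by (simp add: inj_on_Un)
  with \<phi>_ab img_A img_B show ?thesis using that by blast
qed

context simple_graph
begin

lemma contains_if_has_plus_biclique:
  assumes wf: "wf_graph F" and chi: "chromatic_number F = 3" and crit: "color_critical_edge F e"
    and biclique: "has_plus_biclique (card (fst F))"
  shows "contains (V, E) F"
proof -
  obtain u v Y Z where uv: "{u, v} \<in> E"
    and Y: "Y \<subseteq> nbhd u \<inter> nbhd v" "card Y = card (fst F)"
    and Z: "Z \<subseteq> V" "card Z = card (fst F)" "Z \<inter> Y = {}" "u \<notin> Z" "v \<notin> Z"
    and complete: "\<forall>z\<in>Z. \<forall>y\<in>Y. {z, y} \<in> E"
    using biclique unfolding has_plus_biclique_def by blast
  obtain c :: "'b \<Rightarrow> nat" and a b where two: "\<forall>w\<in>fst F. c w < 2"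
    and ab: "e = {a, b}" "a \<in> fst F" "b \<in> fst F" "a \<noteq> b" "c a = c b"
    and proper: "\<And>p q. p \<in> fst F \<Longrightarrow> q \<in> fst F \<Longrightarrow> {p, q} \<in> snd F \<Longrightarrow> {p, q} \<noteq> e \<Longrightarrow> c p \<noteq> c q"
    using critical_edge_two_coloring[OF wf chi crit] by blast
  define A where "A = {w\<in>fst F. c w = c a}"
  define B where "B = {w\<in>fst F. c w \<noteq> c a}"
  have fin_F: "finite (fst F)" using wf unfolding wf_graph_def by simp
  have fin_Y: "finite Y" using Y(1) finite_nbhd finite_subset by blast
  have fin_Z: "finite Z" using Z(1) finite_V finite_subset by blast
  have fin_AB: "finite A" "finite B" unfolding A_def B_def using fin_F by simp_all
  have ab_A: "a \<in> A" "b \<in> A" unfolding A_def using ab by auto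
  have disj: "A \<inter> B = {}" unfolding A_def B_def by auto
  have "card (A - {a, b}) \<le> card Z" unfolding Z(2) A_def by (intro card_mono fin_F) auto
  moreover have "card B \<le> card Y" unfolding Y(2) B_def by (intro card_mono fin_F) auto
  moreover have "u \<noteq> v" using uv edgeD by blast
  moreover have "({u, v} \<union> Z) \<inter> Y = {}" using Y(1) Z(3) not_mem_nbhd_self by blast
  ultimately obtain \<phi> where \<phi>: "\<phi> a = u" "\<phi> b = v" "\<phi> ` A \<subseteq> {u, v} \<union> Z" "\<phi> ` B \<subseteq> Y"
    and inj: "inj_on \<phi> (A \<union> B)"
    using exists_inj_map_into_parts[OF fin_AB fin_Z fin_Y ab_A ab(4) disj] Z(4,5) by metis
  have "A \<union> B = fst F" unfolding A_def B_def by auto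
  have adjacent: "{s, y} \<in> E" if "s \<in> {u, v} \<union> Z" "y \<in> Y" for s y
    using that complete Y(1) mem_nbhd_iff by (auto simp: insert_commute)
  show ?thesis
  proof (rule contains_if_embedding[OF wf])
    show "inj_on \<phi> (fst F)" using inj \<open>A \<union> B = fst F\<close> by simp
    have "\<phi> ` fst F \<subseteq> ({u, v} \<union> Z) \<union> Y"
      using \<phi>(3,4) \<open>A \<union> B = fst F\<close> by (metis image_Un Un_mono)
    moreover have "{u, v} \<union> Z \<union> Y \<subseteq> V"
      using Y(1) Z(1) nbhd_subset[of u] edgeD[OF uv] by blast
    ultimately show "\<phi> ` fst F \<subseteq> V" by blast
    fix p q assume pq: "p \<in> fst F" "q \<in> fst F" "{p, q} \<in> snd F"
    show "{\<phi> p, \<phi> q} \<in> E"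
    proof (cases "{p, q} = e")
      case True
      then show ?thesis using \<phi>(1,2) ab(1) uv by (auto simp: doubleton_eq_iff insert_commute)
    next
      case False
      then have "c p \<noteq> c q" using proper pq by blast
      moreover have "c p < 2" "c q < 2" "c a < 2" using two pq ab(2) by auto
      ultimately have "c p = c a \<or> c q = c a" by presburger
      then have "(p \<in> A \<and> q \<in> B) \<or> (p \<in> B \<and> q \<in> A)"
        using pq \<open>c p \<noteq> c q\<close> unfolding A_def B_def by auto
      then show ?thesis
      proof
        assume "p \<in> A \<and> q \<in> B"
        then show ?thesis using \<phi>(3,4) adjacent by blast
      next
        assume "p \<in> B \<and> q \<in> A"
        then have "{\<phi> q, \<phi> p} \<in> E" using \<phi>(3,4) adjacent by blast
        then show ?thesis by (simp add: insert_commute)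
      qed
    qed
  qed
qed

end

section \<open>Turan graphs\<close>

lemma turan_graph_edge_iff:
  "{x, y} \<in> snd (turan_graph r n) \<longleftrightarrow> x < n \<and> y < n \<and> x mod r \<noteq> y mod r"
  unfolding turan_graph_def by (auto simp: doubleton_eq_iff)

lemma wf_turan_graph: "wf_graph (turan_graph r n)"
  unfolding wf_graph_def turan_graph_def by auto

lemma turan_graph_in_graphs_on: "turan_graph r n \<in> graphs_on n"
  unfolding graphs_on_def using wf_turan_graph by (simp add: turan_graph_def)

lemma F_free_turan_graph:
  assumes "0 < r" "r < chromatic_number F"
  shows "F_free F (turan_graph r n)"
  unfolding F_free_def contains_def
proof
  assume "\<exists>S\<in>subgraphs (turan_graph r n). graph_iso S F"
  then obtain S f where S: "S \<in> subgraphs (turan_graph r n)" and bij: "bij_betw f (fst S) (fst F)"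
    and iso: "\<forall>u\<in>fst S. \<forall>v\<in>fst S. {u, v} \<in> snd S \<longleftrightarrow> {f u, f v} \<in> snd F"
    unfolding graph_iso_def by blast
  define g where "g = inv_into (fst S) f"
  have g: "g w \<in> fst S" "f (g w) = w" if "w \<in> fst F" for w
    using that bij unfolding g_def bij_betw_def by (auto intro: inv_into_into f_inv_into_f)
  have "proper_coloring F r (\<lambda>w. g w mod r)"
    unfolding proper_coloring_def
  proof (intro conjI ballI impI)
    show "g w mod r < r" for w using \<open>0 < r\<close> by simp
    fix p q assume "p \<in> fst F" "q \<in> fst F" "{p, q} \<in> snd F"
    then have "{g p, g q} \<in> snd S" using iso g by metis
    then have "{g p, g q} \<in> snd (turan_graph r n)" using S unfolding subgraphs_def by auto
    then show "g p mod r \<noteq> g q mod r" using turan_graph_edge_iff by blast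
  qed
  then show False using chromatic_number_le assms(2) by fastforce
qed

lemma card_odd_even_below:
  "card {u\<in>{0..<n}. odd u} = n div 2 \<and> card {u\<in>{0..<n}. even u} = (n + 1) div 2"
proof (induction n)
  case (Suc n)
  have split: "{u\<in>{0..<Suc n}. P u} = (if P n then insert n {u\<in>{0..<n}. P u} else {u\<in>{0..<n}. P u})"
    for P by (auto simp: less_Suc_eq)
  show ?case using Suc.IH split[of odd] split[of even] by (cases "even n") (auto elim: evenE oddE)
qed simp

lemma cherry_sum_turan_graph:
  "simple_graph.cherry_sum {0..<n} (snd (turan_graph 2 n)) = turan_cherry_sum n"
proof -
  interpret T: simple_graph "{0..<n}" "snd (turan_graph 2 n)"
    using wf_turan_graph[of 2 n] by unfold_locales (simp add: turan_graph_def)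
  define a b where "a = n div 2" and "b = (n + 1) div 2"
  have deg: "real (T.deg v) = (if even v then real a else real b)" if "v < n" for v
  proof -
    have "T.nbhd v = {u\<in>{0..<n}. u mod 2 \<noteq> v mod 2}"
      unfolding T.nbhd_def using turan_graph_edge_iff that by auto
    also have "\<dots> = (if even v then {u\<in>{0..<n}. odd u} else {u\<in>{0..<n}. even u})"
      by (auto simp: even_iff_mod_2_eq_zero)
    finally show ?thesis using card_odd_even_below unfolding a_def b_def by simp
  qed
  have "T.cherry_sum
      = (\<Sum>v\<in>{0..<n}. if even v then real a * (real a - 1) else real b * (real b - 1))"
    unfolding T.cherry_sum_def by (rule sum.cong) (auto simp: deg)
  also have "\<dots> = (\<Sum>v\<in>{u\<in>{0..<n}. even u}. real a * (real a - 1))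
      + (\<Sum>v\<in>{u\<in>{0..<n}. odd u}. real b * (real b - 1))"
    by (simp add: sum.If_cases Int_def conj_commute)
  also have "\<dots> = real a * real b * (real a + real b - 2)"
    using card_odd_even_below[of n] unfolding a_def b_def by (simp add: algebra_simps)
  also have "a + b = n" unfolding a_def b_def by presburger
  then have "real a + real b = real n" by (simp only: flip: of_nat_add)
  finally show ?thesis unfolding turan_cherry_sum_def a_def b_def by (simp add: algebra_simps)
qed

lemma two_count_copies_P3_turan_graph:
  "2 * real (count_copies P3 (turan_graph 2 n)) = turan_cherry_sum n"
proof -
  interpret T: simple_graph "{0..<n}" "snd (turan_graph 2 n)"
    using wf_turan_graph[of 2 n] by unfold_locales (simp add: turan_graph_def)
  have "turan_graph 2 n = ({0..<n}, snd (turan_graph 2 n))" by (simp add: turan_graph_def)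
  then show ?thesis using T.two_count_copies_P3 cherry_sum_turan_graph by metis
qed

lemma finite_graphs_on: "finite (graphs_on n)"
proof (rule finite_subset)
  show "graphs_on n \<subseteq> {{0..<n}} \<times> Pow (Pow {0..<n})"
    unfolding graphs_on_def wf_graph_def by auto
qed simp

lemma ex_gen_eqI:
  assumes "G \<in> graphs_on n" "F_free F G"
    and "\<And>G'. G' \<in> graphs_on n \<Longrightarrow> F_free F G' \<Longrightarrow> count_copies H G' \<le> count_copies H G"
  shows "ex_gen n H F = count_copies H G"
  unfolding ex_gen_def
proof (rule Max_eqI)
  have "{count_copies H G' |G'. G' \<in> graphs_on n \<and> F_free F G'} \<subseteq> count_copies H ` graphs_on n"
    by blast
  then show "finite {count_copies H G' |G'. G' \<in> graphs_on n \<and> F_free F G'}"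
    using finite_graphs_on finite_subset by blast
qed (use assms in blast)+

theorem theorem1p1:
  fixes F :: "'b graph"
  assumes "wf_graph F"
    and "chromatic_number F = 3"
    and "\<exists>e. color_critical_edge F e"
  shows "\<exists>n0. \<forall>n\<ge>n0. ex_gen n P3 F = count_copies P3 (turan_graph 2 n)"
proof -
  obtain e where crit: "color_critical_edge F e" using assms(3) by blast
  obtain n0 where n0: "\<forall>(V :: nat set) E. simple_graph V E \<longrightarrow>
      \<not> simple_graph.has_plus_biclique V E (card (fst F)) \<longrightarrow>
      n0 \<le> card V \<longrightarrow> simple_graph.cherry_sum V E \<le> turan_cherry_sum (card V)"
    using eventually_cherry_sum_le_turan by blast
  have "ex_gen n P3 F = count_copies P3 (turan_graph 2 n)" if "n0 \<le> n" for n
  proof (rule ex_gen_eqI[OF turan_graph_in_graphs_on F_free_turan_graph])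
    show "0 < (2 :: nat)" "2 < chromatic_number F" using assms(2) by simp_all
    fix G assume G: "G \<in> graphs_on n" "F_free F G"
    then obtain E where G_eq: "G = ({0..<n}, E)" and "simple_graph {0..<n} E"
      unfolding graphs_on_def simple_graph_def by (cases G) auto
    interpret simple_graph "{0..<n}" E by fact
    have "\<not> has_plus_biclique (card (fst F))"
      using contains_if_has_plus_biclique[OF assms(1,2) crit] G(2) G_eq
      unfolding F_free_def by blast
    then have "cherry_sum \<le> turan_cherry_sum n" using n0 \<open>n0 \<le> n\<close> simple_graph_axioms by fastforce
    then show "count_copies P3 G \<le> count_copies P3 (turan_graph 2 n)"
      using two_count_copies_P3 two_count_copies_P3_turan_graph[of n] G_eq by simp
  qed
  then show ?thesis by blast
qed

end
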